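(* Let $p\in(0,1)$, let $t$ be a formal indeterminate, and for $n\ge1$ let $X_n$ be the maximum weight of a directed path from $1$ to $n$ in the transitive tournament on $\{1,\ldots,n\}$ with independent $\mathrm{Bernoulli}(p)$ edge weights. Write $\mathbb{E}[Y_n]=\mathbb{E}[t^{X_n}]=\sum_{k\ge0}\Pr[X_n=k]\,t^k$ for the probability generating function. Then for every $n\ge1$, \[ \mathbb{E}[Y_n]=\sum_{i=1}^{n-1} t\left[(1-p)^{\binom{i}{2}}-(1-p)^{\binom{i+1}{2}}\right]\mathbb{E}[Y_{n-i}]+(1-p)^{\binom{n}{2}}. \] Consequently, with $\mathbb{E}[Y_0]:=1$ and $Z(x,t)=\sum_{n\ge0}\mathbb{E}[Y_n]x^n$, we have \[ Z(x,t)=1+\frac{xB_p(x)}{1-t\,[A_p(x)-B_p(x)]}, \] where $A_p(x)=\sum_{n\ge0}(1-p)^{\binom{n}{2}}x^n$ and $B_p(x)=\sum_{n\ge0}(1-p)^{\binom{n+1}{2}}x^n$.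
   Context: The transitive tournament on $\{1,\ldots,n\}$ has a directed edge $(i,j)$ for every $1\le i<j\le n$. The edge weights $w(i,j)\in\{0,1\}$ are independent, and each equals $1$ with probability $p$. The weight of a path is the sum of its edge weights, and $X_n$ is the maximum weight of a directed path from $1$ to $n$; in particular $X_1=0$. Binomial coefficients satisfy $\binom{0}{2}=\binom{1}{2}=0$. The identity for $Z$ is an identity of formal power series in $x$ whose coefficients are polynomials in $t$. *)

theory Defs
  imports "HOL-Computational_Algebra.Polynomial" "HOL-Computational_Algebra.Formal_Power_Series"
begin

definition edges :: "nat \<Rightarrow> (nat \<times> nat) set" where
  "edges n = {(i, j). 1 \<le> i \<and> i < j \<and> j \<le> n}"

definition is_path :: "nat \<Rightarrow> nat list \<Rightarrow> bool" where
  "is_path n xs \<longleftrightarrow> xs \<noteq> [] \<and> sorted_wrt (<) xs \<and> hd xs = 1 \<and> last xs = n \<and> set xs \<subseteq> {1..n}"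

text \<open>A weight configuration is the set S of edges with weight 1.\<close>
definition path_weight :: "(nat \<times> nat) set \<Rightarrow> nat list \<Rightarrow> nat" where
  "path_weight S xs = sum_list (map (\<lambda>e. if e \<in> S then 1 else 0) (zip xs (tl xs)))"

definition maxw :: "nat \<Rightarrow> (nat \<times> nat) set \<Rightarrow> nat" where
  "maxw n S = Max {path_weight S xs | xs. is_path n xs}"

definition config_prob :: "real \<Rightarrow> nat \<Rightarrow> (nat \<times> nat) set \<Rightarrow> real" where
  "config_prob p n S = p ^ card S * (1 - p) ^ card (edges n - S)"

text \<open>Probability generating function E[t^{X_n}] as a polynomial in t.\<close>
definition pgf :: "real \<Rightarrow> nat \<Rightarrow> real poly" where
  "pgf p n = (\<Sum>S\<in>Pow (edges n). smult (config_prob p n S) ([:0, 1:] ^ maxw n S))"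

definition EY :: "real \<Rightarrow> nat \<Rightarrow> real poly" where
  "EY p n = (if n = 0 then 1 else pgf p n)"

definition Zfps :: "real \<Rightarrow> real poly fps" where
  "Zfps p = Abs_fps (EY p)"

definition Afps :: "real \<Rightarrow> real poly fps" where
  "Afps p = Abs_fps (\<lambda>n. [:(1 - p) ^ (n choose 2):])"

definition Bfps :: "real \<Rightarrow> real poly fps" where
  "Bfps p = Abs_fps (\<lambda>n. [:(1 - p) ^ ((n + 1) choose 2):])"

end

(* Let i + 1 be the smallest vertex entered by a weight-one edge. Then no weight-one edge lies
   inside {1..i}, which has probability (1 - p)^(i choose 2), and one of the i edges into i + 1 has
   weight one, which has probability 1 - (1 - p)^i. A heaviest path from 1 to n then gains exactly one
   on reaching i + 1 and continues as a heaviest path of the tournament on {i + 1..n}, whose weights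
   are independent of the former ones. If no edge has weight one, X_n = 0. Multiplying the recursion
   by x^n and summing over n gives the identity for Z. *)

theory Submission
  imports Defs
begin

definition subset_prob :: "real \<Rightarrow> 'a set \<Rightarrow> 'a set \<Rightarrow> real" where
  "subset_prob p E S = p ^ card S * (1 - p) ^ card (E - S)"

definition subset_expect :: "real \<Rightarrow> 'a set \<Rightarrow> ('a set \<Rightarrow> real poly) \<Rightarrow> real poly" where
  "subset_expect p E f = (\<Sum>S\<in>Pow E. smult (subset_prob p E S) (f S))"

lemma smult_sum_right: "smult c (\<Sum>x\<in>A. f x) = (\<Sum>x\<in>A. smult c (f x))"
  by (induction A rule: infinite_finite_induct) (simp_all add: smult_add_right)

lemma subset_expect_cong:
  "(\<And>S. S \<subseteq> E \<Longrightarrow> f S = g S) \<Longrightarrow> subset_expect p E f = subset_expect p E g"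
  unfolding subset_expect_def by (intro sum.cong) auto

lemma subset_expect_add:
  "subset_expect p E (\<lambda>S. f S + g S) = subset_expect p E f + subset_expect p E g"
  by (simp add: subset_expect_def smult_add_right sum.distrib)

lemma subset_expect_diff:
  "subset_expect p E (\<lambda>S. f S - g S) = subset_expect p E f - subset_expect p E g"
  by (simp add: subset_expect_def smult_diff_right sum_subtractf)

lemma subset_expect_sum:
  "subset_expect p E (\<lambda>S. \<Sum>i\<in>I. f i S) = (\<Sum>i\<in>I. subset_expect p E (f i))"
  unfolding subset_expect_def smult_sum_right by (rule sum.swap)

lemma subset_expect_mult_left:
  "subset_expect p E (\<lambda>S. c * f S) = c * subset_expect p E f"
  by (simp add: subset_expect_def sum_distrib_left mult.left_commute)

lemma subset_expect_image:
  assumes "inj_on \<phi> E"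
  shows "subset_expect p (\<phi> ` E) f = subset_expect p E (\<lambda>S. f (\<phi> ` S))"
proof -
  have "subset_prob p (\<phi> ` E) (\<phi> ` S) = subset_prob p E S" if "S \<subseteq> E" for S
  proof -
    have "\<phi> ` E - \<phi> ` S = \<phi> ` (E - S)"
      using assms that by (auto simp: inj_on_def)
    then show ?thesis
      using assms that by (simp add: subset_prob_def card_image inj_on_subset)
  qed
  moreover have "inj_on (image \<phi>) (Pow E)"
    using assms by (rule inj_on_image_Pow)
  ultimately show ?thesis
    unfolding subset_expect_def image_Pow_surj[OF refl, symmetric]
    by (simp add: sum.reindex)
qed

lemma sum_Pow_Un:
  assumes "finite E1" "finite E2" "E1 \<inter> E2 = {}"
  shows "(\<Sum>S\<in>Pow (E1 \<union> E2). f S) = (\<Sum>S1\<in>Pow E1. \<Sum>S2\<in>Pow E2. f (S1 \<union> S2))"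
proof -
  have "(\<Sum>S\<in>Pow (E1 \<union> E2). f S) = (\<Sum>(S1, S2)\<in>Pow E1 \<times> Pow E2. f (S1 \<union> S2))"
    by (rule sum.reindex_bij_witness[where i = "\<lambda>(S1, S2). S1 \<union> S2" and j = "\<lambda>S. (S \<inter> E1, S \<inter> E2)"])
       (use assms in \<open>auto simp flip: Int_Un_distrib simp: Int_absorb2\<close>)
  then show ?thesis
    by (simp add: sum.cartesian_product)
qed

lemma subset_prob_Un:
  assumes "finite E1" "finite E2" "E1 \<inter> E2 = {}" "S1 \<subseteq> E1" "S2 \<subseteq> E2"
  shows "subset_prob p (E1 \<union> E2) (S1 \<union> S2) = subset_prob p E1 S1 * subset_prob p E2 S2"
proof -
  have "card (S1 \<union> S2) = card S1 + card S2"
    using assms by (intro card_Un_disjoint) (auto intro: finite_subset)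
  moreover have "E1 \<union> E2 - (S1 \<union> S2) = (E1 - S1) \<union> (E2 - S2)"
    using assms by auto
  moreover have "card ((E1 - S1) \<union> (E2 - S2)) = card (E1 - S1) + card (E2 - S2)"
    using assms by (intro card_Un_disjoint) auto
  ultimately show ?thesis
    by (simp add: subset_prob_def power_add)
qed

lemma subset_expect_Un_mult:
  assumes "finite E1" "finite E2" "E1 \<inter> E2 = {}"
    and "\<And>S. S \<subseteq> E1 \<union> E2 \<Longrightarrow> f S = g (S \<inter> E1) * h (S \<inter> E2)"
  shows "subset_expect p (E1 \<union> E2) f = subset_expect p E1 g * subset_expect p E2 h"
proof -
  have "subset_expect p (E1 \<union> E2) f =
      (\<Sum>S1\<in>Pow E1. \<Sum>S2\<in>Pow E2. smult (subset_prob p (E1 \<union> E2) (S1 \<union> S2)) (f (S1 \<union> S2)))"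
    unfolding subset_expect_def using assms(1-3) by (rule sum_Pow_Un)
  also have "\<dots> = (\<Sum>S1\<in>Pow E1. \<Sum>S2\<in>Pow E2.
      smult (subset_prob p E1 S1) (g S1) * smult (subset_prob p E2 S2) (h S2))"
  proof (intro sum.cong refl)
    fix S1 S2 assume S: "S1 \<in> Pow E1" "S2 \<in> Pow E2"
    then have "(S1 \<union> S2) \<inter> E1 = S1" "(S1 \<union> S2) \<inter> E2 = S2"
      using assms(3) by auto
    then have "f (S1 \<union> S2) = g S1 * h S2"
      using S assms(4)[of "S1 \<union> S2"] by auto
    then show "smult (subset_prob p (E1 \<union> E2) (S1 \<union> S2)) (f (S1 \<union> S2)) =
        smult (subset_prob p E1 S1) (g S1) * smult (subset_prob p E2 S2) (h S2)"
      using S assms(1-3) by (simp add: subset_prob_Un mult.commute)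
  qed
  also have "\<dots> = subset_expect p E1 g * subset_expect p E2 h"
    by (simp add: subset_expect_def sum_product)
  finally show ?thesis .
qed

lemma subset_expect_const:
  assumes "finite E"
  shows "subset_expect p E (\<lambda>_. c) = c"
  using assms
proof (induction E rule: finite_induct)
  case empty
  show ?case by (simp add: subset_expect_def subset_prob_def)
next
  case (insert x E)
  have "Pow {x} = {{}, {x}}" by blast
  then have "subset_expect p {x} (\<lambda>_. 1) = 1"
    by (simp add: subset_expect_def subset_prob_def flip: smult_add_left)
  moreover have "subset_expect p ({x} \<union> E) (\<lambda>_. c) = subset_expect p {x} (\<lambda>_. 1) * subset_expect p E (\<lambda>_. c)"
    using insert by (intro subset_expect_Un_mult) auto
  ultimately show ?case
    using insert.IH by simp
qed

lemma subset_expect_restrict: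
  assumes "finite E" "E' \<subseteq> E"
  shows "subset_expect p E (\<lambda>S. f (S \<inter> E')) = subset_expect p E' f"
proof -
  have "E = (E - E') \<union> E'"
    using assms(2) by blast
  moreover have "subset_expect p ((E - E') \<union> E') (\<lambda>S. f (S \<inter> E')) =
      subset_expect p (E - E') (\<lambda>_. 1) * subset_expect p E' f"
    using assms by (intro subset_expect_Un_mult) (auto intro: finite_subset)
  ultimately show ?thesis
    using assms by (simp add: subset_expect_const)
qed

lemma subset_expect_indicator_empty:
  assumes "finite E"
  shows "subset_expect p E (\<lambda>S. if S = {} then 1 else 0) = [:(1 - p) ^ card E:]"
proof -
  have "subset_expect p E (\<lambda>S. if S = {} then 1 else 0) =
      (\<Sum>S\<in>Pow E. if S = {} then [:subset_prob p E {}:] else 0)"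
    unfolding subset_expect_def by (intro sum.cong) auto
  then show ?thesis
    using assms by (simp add: subset_prob_def)
qed

lemma sorted_hd_le: "sorted xs \<Longrightarrow> x \<in> set xs \<Longrightarrow> hd xs \<le> x"
  by (cases xs) auto

lemma sorted_le_last: "sorted xs \<Longrightarrow> x \<in> set xs \<Longrightarrow> x \<le> last xs"
  by (induction xs) (auto simp: last_in_set)

lemma is_path_iff: "is_path n xs \<longleftrightarrow> xs \<noteq> [] \<and> sorted_wrt (<) xs \<and> hd xs = 1 \<and> last xs = n"
  by (auto simp: is_path_def strict_sorted_iff sorted_le_last) (metis One_nat_def sorted_hd_le)

lemma is_path_upt: "1 \<le> n \<Longrightarrow> is_path n [1..<Suc n]"
  by (simp add: is_path_iff del: upt_Suc)

lemma is_path_length: "is_path n xs \<Longrightarrow> length xs \<le> n"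
  using distinct_card[of xs] card_mono[of "{1..n}" "set xs"]
  by (auto simp: is_path_def strict_sorted_iff)

lemma set_zip_tl_subset_edges:
  "sorted_wrt (<) xs \<Longrightarrow> set xs \<subseteq> {1..n} \<Longrightarrow> set (zip xs (tl xs)) \<subseteq> edges n"
  by (induction xs rule: induct_list012) (auto simp: edges_def)

lemma path_weight_simps [simp]:
  "path_weight S [] = 0"
  "path_weight S [x] = 0"
  "path_weight S (x # y # xs) = (if (x, y) \<in> S then 1 else 0) + path_weight S (y # xs)"
  by (simp_all add: path_weight_def)

lemma path_weight_le_length: "path_weight S xs \<le> length xs"
  by (induction xs rule: induct_list012) auto

lemma path_weight_le_Cons: "path_weight S xs \<le> path_weight S (x # xs)"
  by (cases xs) auto

lemma path_weight_append:
  "xs \<noteq> [] \<Longrightarrow> ys \<noteq> [] \<Longrightarrow> path_weight S (xs @ ys) =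
    path_weight S xs + (if (last xs, hd ys) \<in> S then 1 else 0) + path_weight S ys"
proof (induction xs rule: induct_list012)
  case (3 x y zs)
  then show ?case by (cases zs) auto
qed (auto simp: neq_Nil_conv)

lemma path_weight_cong:
  "(\<And>e. e \<in> set (zip xs (tl xs)) \<Longrightarrow> e \<in> S \<longleftrightarrow> e \<in> S') \<Longrightarrow> path_weight S xs = path_weight S' xs"
  unfolding path_weight_def by (intro arg_cong[where f = sum_list] map_cong) auto

lemma path_weight_eq_0: "set (zip xs (tl xs)) \<inter> S = {} \<Longrightarrow> path_weight S xs = 0"
  by (induction xs rule: induct_list012) auto

lemma path_weight_map: "path_weight S (map f xs) = path_weight (map_prod f f -` S) xs"
proof -
  have "zip (map f xs) (tl (map f xs)) = map (map_prod f f) (zip xs (tl xs))"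
    by (auto simp: zip_map_map map_prod_def simp flip: map_tl)
  then show ?thesis
    by (simp add: path_weight_def comp_def)
qed

lemma finite_path_weights: "finite {path_weight S xs | xs. is_path n xs}"
proof (rule finite_subset)
  show "{path_weight S xs | xs. is_path n xs} \<subseteq> {..n}"
    using path_weight_le_length is_path_length by (fastforce intro: order.trans)
qed simp

lemma maxw_ge: "is_path n xs \<Longrightarrow> path_weight S xs \<le> maxw n S"
  unfolding maxw_def by (rule Max_ge[OF finite_path_weights]) auto

lemma maxw_attained:
  assumes "1 \<le> n"
  obtains xs where "is_path n xs" "path_weight S xs = maxw n S"
proof -
  have "maxw n S \<in> {path_weight S xs | xs. is_path n xs}"
    unfolding maxw_def using is_path_upt[OF assms] by (intro Max_in finite_path_weights) auto
  then show ?thesis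
    using that by auto
qed

lemma maxw_cong:
  assumes "S \<inter> edges n = S' \<inter> edges n"
  shows "maxw n S = maxw n S'"
proof -
  have "path_weight S xs = path_weight S' xs" if "is_path n xs" for xs
  proof (rule path_weight_cong)
    fix e assume "e \<in> set (zip xs (tl xs))"
    then have "e \<in> edges n"
      using that set_zip_tl_subset_edges by (fastforce simp: is_path_def)
    then show "e \<in> S \<longleftrightarrow> e \<in> S'"
      using assms by blast
  qed
  then have "{path_weight S xs | xs. is_path n xs} = {path_weight S' xs | xs. is_path n xs}"
    by (metis (no_types, opaque_lifting))
  then show ?thesis
    by (simp add: maxw_def)
qed

lemma maxw_empty:
  assumes "1 \<le> n"
  shows "maxw n {} = 0"
proof -
  obtain xs where "path_weight {} xs = maxw n {}"
    using maxw_attained[OF assms] by blast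
  then show ?thesis
    by (simp add: path_weight_eq_0)
qed

lemma finite_edges [simp]: "finite (edges n)"
  by (rule finite_subset[of _ "{..n} \<times> {..n}"]) (auto simp: edges_def)

lemma edges_mono: "m \<le> n \<Longrightarrow> edges m \<subseteq> edges n"
  by (auto simp: edges_def)

lemma edges_0_1: "edges 0 = {}" "edges 1 = {}"
  by (auto simp: edges_def)

lemma card_edges: "card (edges n) = n choose 2"
proof (induction n)
  case 0
  then show ?case by (simp add: edges_0_1)
next
  case (Suc n)
  have "edges (Suc n) = edges n \<union> (\<lambda>a. (a, Suc n)) ` {1..n}"
    by (auto simp: edges_def)
  moreover have "card ((\<lambda>a. (a, Suc n)) ` {1..n}) = n"
    by (simp add: card_image inj_on_def)
  moreover have "card (edges n \<union> (\<lambda>a. (a, Suc n)) ` {1..n}) =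
      card (edges n) + card ((\<lambda>a. (a, Suc n)) ` {1..n})"
    by (intro card_Un_disjoint finite_edges finite_imageI finite_atLeastAtMost) (auto simp: edges_def)
  ultimately have "card (edges (Suc n)) = card (edges n) + n"
    by simp
  then show ?case
    using Suc by (simp add: numeral_2_eq_2)
qed

definition shift_edge :: "nat \<Rightarrow> nat \<times> nat \<Rightarrow> nat \<times> nat" where
  "shift_edge i = map_prod (\<lambda>x. x + i) (\<lambda>x. x + i)"

lemma inj_shift_edge: "inj (shift_edge i)"
  by (auto simp: shift_edge_def inj_def)

lemma shift_edges_subset: "shift_edge i ` edges (n - i) \<subseteq> edges n - edges (Suc i)"
  by (auto simp: shift_edge_def edges_def)

text \<open>\<open>h\<close> is the smallest vertex entered by a weight-one edge.\<close>
definition first_head :: "(nat \<times> nat) set \<Rightarrow> nat \<Rightarrow> bool" where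
  "first_head S h \<longleftrightarrow> S \<inter> edges (h - 1) = {} \<and> S \<inter> edges h \<noteq> {}"

lemma first_head_Int_edges: "first_head (S \<inter> edges h) h \<longleftrightarrow> first_head S h"
  using edges_mono[of "h - 1" h] by (auto simp: first_head_def)

lemma first_head_unique:
  assumes "first_head S h" "first_head S h'"
  shows "h = h'"
proof -
  have False if "h < h'" "first_head S h" "first_head S h'" for h h'
  proof -
    have "edges h \<subseteq> edges (h' - 1)"
      using \<open>h < h'\<close> by (intro edges_mono) simp
    then show False
      using that(2,3) by (auto simp: first_head_def)
  qed
  then show ?thesis
    using assms by (meson linorder_neqE_nat)
qed

lemma first_head_exists:
  assumes "S \<subseteq> edges n" "S \<noteq> {}"
  obtains i where "i \<in> {1..n - 1}" "first_head S (Suc i)"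
proof -
  define h where "h = (LEAST h. S \<inter> edges h \<noteq> {})"
  have "S \<inter> edges n \<noteq> {}"
    using assms by blast
  then have h: "S \<inter> edges h \<noteq> {}" "h \<le> n"
    unfolding h_def by (rule LeastI, rule Least_le)
  moreover have "S \<inter> edges (h - 1) = {}"
  proof (cases h)
    case (Suc k)
    then show ?thesis
      using not_less_Least[of k "\<lambda>h. S \<inter> edges h \<noteq> {}"] by (simp add: h_def)
  qed (simp add: edges_0_1)
  moreover have "2 \<le> h"
    using h by (cases "h \<le> 1") (auto simp: edges_def)
  ultimately have "h - 1 \<in> {1..n - 1}" "first_head S (Suc (h - 1))"
    by (auto simp: first_head_def)
  then show ?thesis
    by (rule that)
qed

lemma first_head_imp_edge:
  assumes "first_head S (Suc i)"
  obtains a where "(a, Suc i) \<in> S" "1 \<le> a" "a \<le> i"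
proof -
  obtain a b where ab: "(a, b) \<in> S" "(a, b) \<in> edges (Suc i)"
    using assms by (auto simp: first_head_def)
  moreover have "(a, b) \<notin> edges i"
    using assms ab(1) by (auto simp: first_head_def)
  ultimately have "b = Suc i" "1 \<le> a" "a \<le> i"
    by (auto simp: edges_def)
  then show ?thesis
    using that ab(1) by blast
qed

lemma path_weight_le_maxw_shift:
  assumes "zs \<noteq> []" "sorted_wrt (<) zs" "hd zs = Suc i" "last zs = n"
  shows "path_weight S zs \<le> maxw (n - i) (shift_edge i -` S)"
proof -
  define ys where "ys = map (\<lambda>x. x - i) zs"
  have lower: "Suc i \<le> x" if "x \<in> set zs" for x
    using assms that sorted_hd_le by (fastforce simp: strict_sorted_iff)
  have "map (\<lambda>x. x + i) ys = zs"
    unfolding ys_def map_map by (rule map_idI) (use lower in fastforce)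
  moreover have "sorted_wrt (<) ys"
    unfolding ys_def sorted_wrt_map
    by (rule sorted_wrt_mono_rel[OF _ assms(2)]) (use lower in fastforce)
  moreover have "is_path (n - i) ys"
    using assms \<open>sorted_wrt (<) ys\<close> by (simp add: is_path_iff ys_def hd_map last_map)
  ultimately show ?thesis
    using maxw_ge[of "n - i" ys] path_weight_map[of S "\<lambda>x. x + i" ys] by (simp add: shift_edge_def)
qed

text \<open>The path gains nothing before \<open>i + 1\<close> and at most one on the edge entering \<open>{i + 1..}\<close>;
  prefixing \<open>i + 1\<close> to the rest can only add weight.\<close>
lemma path_weight_le_Suc_tail:
  assumes "is_path n xs" "1 \<le> i" "i < n" "S \<inter> edges i = {}"
  obtains zs where "zs \<noteq> []" "sorted_wrt (<) zs" "hd zs = Suc i" "last zs = n"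
    "path_weight S xs \<le> Suc (path_weight S zs)"
proof -
  have xs: "xs \<noteq> []" "sorted_wrt (<) xs" "hd xs = 1" "last xs = n"
    using assms(1) by (auto simp: is_path_iff)
  define lo where "lo = takeWhile (\<lambda>x. x \<le> i) xs"
  define hi where "hi = dropWhile (\<lambda>x. x \<le> i) xs"
  have xs_split: "xs = lo @ hi"
    by (simp add: lo_def hi_def)
  have "lo \<noteq> []"
    using xs assms(2) by (cases xs) (auto simp: lo_def)
  have "hi \<noteq> []"
    using xs assms(3) by (auto simp: hi_def dropWhile_eq_Nil_conv intro!: bexI[of _ "last xs"])
  have sorted_lo_hi: "sorted_wrt (<) lo" "sorted_wrt (<) hi"
    using xs(2) xs_split sorted_wrt_append by metis+
  have "set lo \<subseteq> {1..i}"
    using assms(1) set_takeWhileD[of _ "\<lambda>x. x \<le> i" xs] by (fastforce simp: lo_def is_path_def)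
  then have "path_weight S lo = 0"
    using set_zip_tl_subset_edges[OF sorted_lo_hi(1)] assms(4) by (blast intro: path_weight_eq_0)
  then have "path_weight S xs \<le> Suc (path_weight S hi)"
    using path_weight_append[OF \<open>lo \<noteq> []\<close> \<open>hi \<noteq> []\<close>, of S] xs_split by simp
  define zs where "zs = (if hd hi = Suc i then hi else Suc i # hi)"
  have "path_weight S hi \<le> path_weight S zs"
    by (simp add: zs_def path_weight_le_Cons)
  have "Suc i \<le> hd hi"
    using hd_dropWhile[OF \<open>hi \<noteq> []\<close>[unfolded hi_def]] by (simp add: hi_def)
  then have "sorted_wrt (<) zs"
    using sorted_lo_hi(2) \<open>hi \<noteq> []\<close> sorted_hd_le by (fastforce simp: zs_def strict_sorted_iff)
  moreover have "zs \<noteq> []" "hd zs = Suc i" "last zs = n"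
    using \<open>hi \<noteq> []\<close> xs(4) xs_split by (auto simp: zs_def)
  moreover have "path_weight S xs \<le> Suc (path_weight S zs)"
    using \<open>path_weight S xs \<le> Suc (path_weight S hi)\<close> \<open>path_weight S hi \<le> path_weight S zs\<close> by linarith
  ultimately show ?thesis
    using that by blast
qed

lemma maxw_le_Suc_maxw_shift:
  assumes "1 \<le> i" "i < n" "S \<inter> edges i = {}"
  shows "maxw n S \<le> Suc (maxw (n - i) (shift_edge i -` S))"
proof -
  have "1 \<le> n"
    using assms(1,2) by simp
  then obtain xs where xs: "is_path n xs" "path_weight S xs = maxw n S"
    by (rule maxw_attained)
  obtain zs where "zs \<noteq> []" "sorted_wrt (<) zs" "hd zs = Suc i" "last zs = n"
    and "path_weight S xs \<le> Suc (path_weight S zs)"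
    using path_weight_le_Suc_tail[OF xs(1) assms] .
  moreover from this have "path_weight S zs \<le> maxw (n - i) (shift_edge i -` S)"
    by (intro path_weight_le_maxw_shift)
  ultimately show ?thesis
    using xs(2) by linarith
qed

lemma Suc_maxw_shift_le_maxw:
  assumes "i < n" "(a, Suc i) \<in> S" "1 \<le> a" "a \<le> i"
  shows "Suc (maxw (n - i) (shift_edge i -` S)) \<le> maxw n S"
proof -
  have "1 \<le> n - i"
    using assms(1) by simp
  then obtain ys where ys: "is_path (n - i) ys"
    "path_weight (shift_edge i -` S) ys = maxw (n - i) (shift_edge i -` S)"
    by (rule maxw_attained)
  then have ys': "ys \<noteq> []" "sorted_wrt (<) ys" "hd ys = 1" "last ys = n - i"
    by (auto simp: is_path_iff)
  define hi where "hi = map (\<lambda>x. x + i) ys"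
  have "path_weight S hi = maxw (n - i) (shift_edge i -` S)"
    using ys(2) by (simp add: hi_def path_weight_map shift_edge_def)
  have hi: "hi \<noteq> []" "hd hi = Suc i" "last hi = n" "\<forall>x\<in>set hi. Suc i \<le> x"
    using ys' assms(1) is_path_def ys(1) by (auto simp: hi_def hd_map last_map)
  have "is_path n ([1..<Suc a] @ hi)"
    using ys'(2) hi assms(3,4) by (auto simp: is_path_iff sorted_wrt_append hi_def sorted_wrt_map simp del: upt_Suc)
  moreover have "path_weight S ([1..<Suc a] @ hi) \<ge> Suc (path_weight S hi)"
    using path_weight_append[of "[1..<Suc a]" hi S] hi assms(2,3) by (simp del: upt_Suc)
  ultimately show ?thesis
    using maxw_ge \<open>path_weight S hi = maxw (n - i) (shift_edge i -` S)\<close> by (metis le_trans)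
qed

lemma maxw_first_head:
  assumes "i < n" "first_head S (Suc i)"
  shows "maxw n S = Suc (maxw (n - i) (shift_edge i -` S))"
proof -
  obtain a where a: "(a, Suc i) \<in> S" "1 \<le> a" "a \<le> i"
    using assms(2) by (rule first_head_imp_edge)
  have "S \<inter> edges i = {}"
    using assms(2) by (simp add: first_head_def)
  then show ?thesis
    using maxw_le_Suc_maxw_shift Suc_maxw_shift_le_maxw a assms(1) by (meson antisym le_trans)
qed

lemma pgf_eq_subset_expect: "pgf p n = subset_expect p (edges n) (\<lambda>S. [:0, 1:] ^ maxw n S)"
  by (simp add: pgf_def subset_expect_def config_prob_def subset_prob_def)

lemma power_maxw_split_first_head:
  assumes "1 \<le> n" "S \<subseteq> edges n"
  shows "[:0, 1:] ^ maxw n S = (if S = {} then 1 else 0)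
    + (\<Sum>i=1..n-1. if first_head S (Suc i) then [:0, 1:] ^ maxw n S else 0)"
proof (cases "S = {}")
  case True
  then show ?thesis
    using assms(1) by (simp add: maxw_empty first_head_def)
next
  case False
  then obtain h where h: "h \<in> {1..n - 1}" "first_head S (Suc h)"
    using first_head_exists[OF assms(2)] by blast
  then have "first_head S (Suc i) \<longleftrightarrow> i = h" for i
    using first_head_unique by blast
  then show ?thesis
    using False h(1) by simp
qed

lemma prob_first_head:
  "subset_expect p (edges (Suc i)) (\<lambda>T. if first_head T (Suc i) then 1 else 0) =
    [:(1 - p) ^ (i choose 2) - (1 - p) ^ ((i + 1) choose 2):]"
proof -
  have "subset_expect p (edges (Suc i)) (\<lambda>T. if first_head T (Suc i) then 1 else 0) =
      subset_expect p (edges (Suc i)) (\<lambda>T. (if T \<inter> edges i = {} then 1 else 0) - (if T = {} then 1 else 0))"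
    by (intro subset_expect_cong) (auto simp: first_head_def Int_absorb2)
  also have "\<dots> = [:(1 - p) ^ card (edges i):] - [:(1 - p) ^ card (edges (Suc i)):]"
    unfolding subset_expect_diff
    by (simp add: subset_expect_restrict[where f = "\<lambda>T. if T = {} then 1 else 0"] edges_mono
        subset_expect_indicator_empty)
  finally show ?thesis
    by (simp add: card_edges)
qed

lemma pgf_shift:
  "subset_expect p (shift_edge i ` edges m) (\<lambda>C. [:0, 1:] ^ maxw m (shift_edge i -` C)) = pgf p m"
proof -
  have "inj_on (shift_edge i) (edges m)"
    using inj_shift_edge by (rule inj_on_subset) simp
  then show ?thesis
    using inj_shift_edge by (simp add: subset_expect_image pgf_eq_subset_expect inj_vimage_image_eq)
qed

lemma subset_expect_first_head:
  assumes "i < n"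
  shows "subset_expect p (edges n) (\<lambda>S. if first_head S (Suc i) then [:0, 1:] ^ maxw n S else 0) =
    smult ((1 - p) ^ (i choose 2) - (1 - p) ^ ((i + 1) choose 2)) ([:0, 1:] * pgf p (n - i))"
proof -
  define E1 where "E1 = edges (Suc i)"
  define E2 where "E2 = edges n - edges (Suc i)"
  define U where "U = shift_edge i ` edges (n - i)"
  have "edges n = E1 \<union> E2"
    using edges_mono[of "Suc i" n] assms by (auto simp: E1_def E2_def)
  have "U \<subseteq> E2"
    using shift_edges_subset by (simp add: U_def E2_def)
  have factor: "(if first_head S (Suc i) then [:0, 1:] ^ maxw n S else 0) =
      (if first_head (S \<inter> E1) (Suc i) then 1 else 0)
      * ([:0, 1:] * [:0, 1:] ^ maxw (n - i) (shift_edge i -` (S \<inter> E2 \<inter> U)))" for S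
  proof (cases "first_head S (Suc i)")
    case True
    have "shift_edge i -` S \<inter> edges (n - i) = shift_edge i -` (S \<inter> E2 \<inter> U) \<inter> edges (n - i)"
      using \<open>U \<subseteq> E2\<close> by (auto simp: U_def)
    then have "maxw (n - i) (shift_edge i -` S) = maxw (n - i) (shift_edge i -` (S \<inter> E2 \<inter> U))"
      by (rule maxw_cong)
    then show ?thesis
      using True maxw_first_head[OF assms True] by (simp add: E1_def first_head_Int_edges)
  qed (simp add: E1_def first_head_Int_edges)
  have "subset_expect p (edges n) (\<lambda>S. if first_head S (Suc i) then [:0, 1:] ^ maxw n S else 0) =
      subset_expect p E1 (\<lambda>T. if first_head T (Suc i) then 1 else 0)
      * subset_expect p E2 (\<lambda>T. [:0, 1:] * [:0, 1:] ^ maxw (n - i) (shift_edge i -` (T \<inter> U)))"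
    unfolding \<open>edges n = E1 \<union> E2\<close>
    by (rule subset_expect_Un_mult) (auto simp: E1_def E2_def factor)
  also have "subset_expect p E2 (\<lambda>T. [:0, 1:] * [:0, 1:] ^ maxw (n - i) (shift_edge i -` (T \<inter> U))) =
      [:0, 1:] * subset_expect p U (\<lambda>C. [:0, 1:] ^ maxw (n - i) (shift_edge i -` C))"
    by (subst subset_expect_mult_left, subst subset_expect_restrict)
      (use \<open>U \<subseteq> E2\<close> in \<open>simp_all add: E2_def\<close>)
  also have "\<dots> = [:0, 1:] * pgf p (n - i)"
    by (simp only: U_def pgf_shift)
  finally show ?thesis
    by (simp add: E1_def prob_first_head)
qed

lemma pgf_recursion:
  assumes "1 \<le> n"
  shows "pgf p n = (\<Sum>i=1..n-1. smult ((1 - p) ^ (i choose 2) - (1 - p) ^ ((i + 1) choose 2))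
                               ([:0, 1:] * pgf p (n - i))) + [:(1 - p) ^ (n choose 2):]"
proof -
  have "pgf p n = subset_expect p (edges n) (\<lambda>S. (if S = {} then 1 else 0)
      + (\<Sum>i=1..n-1. if first_head S (Suc i) then [:0, 1:] ^ maxw n S else 0))"
    unfolding pgf_eq_subset_expect using assms
    by (intro subset_expect_cong power_maxw_split_first_head)
  also have "\<dots> = [:(1 - p) ^ (n choose 2):] + (\<Sum>i=1..n-1.
      subset_expect p (edges n) (\<lambda>S. if first_head S (Suc i) then [:0, 1:] ^ maxw n S else 0))"
    by (simp add: subset_expect_add subset_expect_sum subset_expect_indicator_empty card_edges)
  also have "\<dots> = [:(1 - p) ^ (n choose 2):] + (\<Sum>i=1..n-1. smult ((1 - p) ^ (i choose 2)
      - (1 - p) ^ ((i + 1) choose 2)) ([:0, 1:] * pgf p (n - i)))"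
    using assms by (intro arg_cong2[where f = "(+)"] sum.cong refl subset_expect_first_head) auto
  finally show ?thesis
    by (simp add: add.commute)
qed

unbundle fps_syntax

lemma Zfps_equation: "(Zfps p - 1) * (1 - fps_const [:0, 1:] * (Afps p - Bfps p)) = fps_X * Bfps p"
proof -
  define U where "U = Zfps p - 1"
  define K where "K = Afps p - Bfps p"
  have U_nth: "U $ n = (if n = 0 then 0 else pgf p n)" for n
    by (simp add: U_def Zfps_def EY_def)
  have K_nth: "K $ i = [:(1 - p) ^ (i choose 2) - (1 - p) ^ ((i + 1) choose 2):]" for i
    by (simp add: K_def Afps_def Bfps_def)
  have "U = fps_const [:0, 1:] * (K * U) + fps_X * Bfps p"
  proof (rule fps_ext)
    fix n :: nat
    show "U $ n = (fps_const [:0, 1:] * (K * U) + fps_X * Bfps p) $ n"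
    proof (cases "n = 0")
      case False
      have "(K * U) $ n = (\<Sum>i=1..n-1. K $ i * U $ (n - i))"
      proof -
        have "{0..n} = insert 0 (insert n {1..n-1})"
          using False by auto
        then show ?thesis
          using False by (simp add: fps_mult_nth U_nth K_nth numeral_2_eq_2)
      qed
      also have "\<dots> = (\<Sum>i=1..n-1. smult ((1 - p) ^ (i choose 2) - (1 - p) ^ ((i + 1) choose 2)) (pgf p (n - i)))"
        by (intro sum.cong refl) (auto simp: K_nth U_nth)
      finally show ?thesis
        using False pgf_recursion[of n p] by (simp add: U_nth Bfps_def sum_distrib_left)
    qed (simp add: U_nth)
  qed
  then have "U * (1 - fps_const [:0, 1:] * K) = fps_X * Bfps p"
    by (simp add: algebra_simps)
  then show ?thesis
    by (simp add: U_def K_def)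
qed

theorem theorem3:
  fixes p :: real
  assumes "0 < p" and "p < 1"
  shows "(\<forall>n\<ge>1. pgf p n =
            (\<Sum>i=1..n-1. smult ((1 - p) ^ (i choose 2) - (1 - p) ^ ((i + 1) choose 2))
                               ([:0, 1:] * pgf p (n - i)))
            + [:(1 - p) ^ (n choose 2):])
       \<and> (Zfps p - 1) * (1 - fps_const [:0, 1:] * (Afps p - Bfps p)) = fps_X * Bfps p"
  \<comment> \<open>Both identities are polynomial in \<open>p\<close>.\<close>
  using pgf_recursion Zfps_equation by blast

end
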